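(* Let $d\in\mathbb{N}$, $C>0$, $N\ge Cd$ and $t>0$. Then for every $x\in\mathbb{R}^d$ with $|x|\ge N(1+t/N)^{1/2}$, $$|Q\cap(B^2_N-x)|=|\{y\in Q: x+y\in B^2_N\}|\le 2e^{-ct^2},\qquad\text{where } c=\frac{7}{32}\frac{C^2}{(C+1)^2}.$$
   Context: $Q=[-1/2,1/2]^d$ is the unit cube, $B^2_N=\{x\in\mathbb{R}^d:|x|\le N\}$ is the closed Euclidean ball of radius $N$, $|\cdot|$ on sets denotes Lebesgue measure and on vectors the Euclidean norm. *)

theory Defs
  imports "HOL-Analysis.Analysis"
begin

definition unit_cube :: "(real^'n) set" where
  "unit_cube = {y. \<forall>i. \<bar>y $ i\<bar> \<le> 1/2}"

end

theory Submission
  imports Defs "HOL-Probability.Hoeffding"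
begin

text \<open>
  If \<open>y \<in> Q\<close> and \<open>|x + y| \<le> N\<close>, then \<open>|x|\<^sup>2 + 2 x\<bullet>y \<le> N\<^sup>2\<close>, so \<open>x\<bullet>y \<le> -tN/2\<close>:
  the set in question lies in the part of the cube cut off by a half-space
  far from its centre. The coordinates of a uniform point of \<open>Q\<close> are independent
  and centred on intervals of length 1, so by Hoeffding's lemma and a Chernoff
  bound this part has measure at most \<open>exp (-2 s\<^sup>2 / |x|\<^sup>2)\<close> with \<open>s = tN/2\<close>.
  Finally, a nonempty intersection forces \<open>|x| \<le> N + d/2 \<le> (1 + 1/C) N\<close>, so the
  exponent is at least \<open>C\<^sup>2 t\<^sup>2 / (2 (C + 1)\<^sup>2)\<close>; the constant \<open>1/2\<close> beats \<open>7/32\<close>.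
\<close>

lemma nn_integral_exp_interval_le:
  fixes a :: real
  shows "(\<integral>\<^sup>+r. ennreal (indicator {-1/2..1/2} r * exp (a * r)) \<partial>lborel) \<le> ennreal (exp (a\<^sup>2 / 8))"
proof -
  define A where "A = {-1/2..1/2::real}"
  define M where "M = uniform_measure lborel A"
  have A1: "emeasure lborel A = 1" unfolding A_def by simp
  have "prob_space M" unfolding M_def by (rule prob_space_uniform_measure) (simp_all add: A1)
  then interpret interval_bounded_random_variable M "\<lambda>r. a * r" "-\<bar>a\<bar>/2" "\<bar>a\<bar>/2"
  proof (intro interval_bounded_random_variable.intro interval_bounded_random_variable_axioms.intro)
    show "(\<lambda>r. a * r) \<in> borel_measurable M" unfolding M_def by simp
    have "a * r \<in> {-\<bar>a\<bar>/2..\<bar>a\<bar>/2}" if "r \<in> A" for r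
    proof -
      have "\<bar>a * r\<bar> \<le> \<bar>a\<bar> * (1/2)"
        using that unfolding A_def abs_mult by (intro mult_left_mono) auto
      then show ?thesis by auto
    qed
    then show "AE r in M. a * r \<in> {-\<bar>a\<bar>/2..\<bar>a\<bar>/2}"
      unfolding M_def by (intro AE_uniform_measureI always_eventually) (auto simp: A_def)
  qed
  have M_density: "M = density lborel (\<lambda>r. ennreal (indicator A r))"
    unfolding M_def uniform_measure_def A1
    by (intro arg_cong2[where f=density] refl ext) (simp add: indicator_def)
  have "expectation (\<lambda>r. a * r) = integral\<^sup>L lborel (\<lambda>r. indicator A r *\<^sub>R (a * r))"
    unfolding M_density by (subst integral_density) (auto simp: A_def)
  also have "\<dots> = (a/2) * (1/2)\<^sup>2 - (a/2) * (-1/2)\<^sup>2"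
    unfolding A_def
    by (rule integral_FTC_atLeastAtMost[where F="\<lambda>r. (a/2) * r\<^sup>2"])
       (auto intro!: derivative_eq_intros continuous_intros
             simp: has_real_derivative_iff_has_vector_derivative[symmetric])
  finally have centred: "expectation (\<lambda>r. a * r) = 0" by simp
  have "(\<integral>\<^sup>+r. ennreal (indicator {-1/2..1/2} r * exp (a * r)) \<partial>lborel)
      = (\<integral>\<^sup>+r. exp (1 * (a * r)) \<partial>M)"
    unfolding M_density A_def
    by (subst nn_integral_density) (auto intro!: nn_integral_cong simp: indicator_def)
  also have "\<dots> \<le> ennreal (exp (1\<^sup>2 * (\<bar>a\<bar>/2 - (-\<bar>a\<bar>/2))\<^sup>2 / 8))"
    by (rule Hoeffdings_lemma_nn_integral_0[OF _ centred]) simp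
  finally show ?thesis by (simp add: power2_eq_square)
qed

definition centred_unit_box :: "'a::euclidean_space set" where
  "centred_unit_box = cbox (- (1/2) *\<^sub>R One) ((1/2) *\<^sub>R One)"

lemma mem_centred_unit_box: "y \<in> centred_unit_box \<longleftrightarrow> (\<forall>b\<in>Basis. \<bar>y \<bullet> b\<bar> \<le> 1/2)"
  by (auto simp: centred_unit_box_def mem_box abs_le_iff)

lemma centred_unit_box_sets [measurable]: "centred_unit_box \<in> sets borel"
  by (simp add: centred_unit_box_def)

lemma unit_cube_eq_centred_unit_box: "unit_cube = centred_unit_box"
  by (auto simp: unit_cube_def mem_centred_unit_box cart_eq_inner_axis Basis_vec_def)

lemma nn_integral_centred_unit_box_exp_inner_le:
  fixes a :: "'a::euclidean_space"
  shows "(\<integral>\<^sup>+y. indicator centred_unit_box y * ennreal (exp (a \<bullet> y)) \<partial>lborel)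
           \<le> ennreal (exp ((norm a)\<^sup>2 / 8))"
proof -
  define g where "g b r = ennreal (indicator {-1/2..1/2} r * exp ((a \<bullet> b) * r))" for b r
  have factor: "indicator centred_unit_box y * ennreal (exp (a \<bullet> y)) = (\<Prod>b\<in>Basis. g b (y \<bullet> b))"
    for y
  proof (cases "y \<in> centred_unit_box")
    case True
    then have "(\<Prod>b\<in>Basis. g b (y \<bullet> b)) = (\<Prod>b\<in>Basis. ennreal (exp ((a \<bullet> b) * (y \<bullet> b))))"
      by (intro prod.cong) (auto simp: g_def indicator_def mem_centred_unit_box)
    also have "\<dots> = ennreal (\<Prod>b\<in>Basis. exp ((a \<bullet> b) * (y \<bullet> b)))"
      by (simp add: prod_ennreal)
    also have "\<dots> = ennreal (exp (a \<bullet> y))"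
      by (simp add: exp_sum euclidean_inner[of a y])
    finally show ?thesis using True by simp
  next
    case False
    then obtain b where b: "b \<in> Basis" "\<bar>y \<bullet> b\<bar> > 1/2" by (auto simp: mem_centred_unit_box)
    then have "g b (y \<bullet> b) = 0" by (auto simp: g_def indicator_def)
    with b have "(\<Prod>b\<in>Basis. g b (y \<bullet> b)) = 0" by (intro prod_zero) auto
    with False show ?thesis by simp
  qed
  have "(\<integral>\<^sup>+y. indicator centred_unit_box y * ennreal (exp (a \<bullet> y)) \<partial>lborel)
      = (\<integral>\<^sup>+y. (\<Prod>b\<in>Basis. g b (y \<bullet> b)) \<partial>lborel)"
    by (simp only: factor)
  also have "\<dots> = (\<Prod>b\<in>Basis. \<integral>\<^sup>+r. g b r \<partial>lborel)"
    by (rule nn_integral_lborel_prod) (simp_all add: g_def)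
  also have "\<dots> \<le> (\<Prod>b\<in>Basis. ennreal (exp ((a \<bullet> b)\<^sup>2 / 8)))"
    unfolding g_def by (intro prod_mono_ennreal nn_integral_exp_interval_le)
  also have "\<dots> = ennreal (exp ((\<Sum>b\<in>Basis. (a \<bullet> b)\<^sup>2) / 8))"
    by (simp add: prod_ennreal exp_sum sum_divide_distrib)
  also have "(\<Sum>b\<in>Basis. (a \<bullet> b)\<^sup>2) = (norm a)\<^sup>2"
    unfolding power2_norm_eq_inner euclidean_inner[of a a] by (simp add: power2_eq_square)
  finally show ?thesis .
qed

lemma emeasure_centred_unit_box_halfspace_le_exp:
  fixes x :: "'a::euclidean_space" and l s :: real
  assumes "l \<ge> 0"
  shows "emeasure lborel (centred_unit_box \<inter> {y. x \<bullet> y \<le> -s})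
           \<le> ennreal (exp (- l * s + l\<^sup>2 * (norm x)\<^sup>2 / 8))"
proof -
  let ?H = "centred_unit_box \<inter> {y. x \<bullet> y \<le> -s}"
  have markov: "indicator ?H y
      \<le> ennreal (exp (- l * s)) * (indicator centred_unit_box y * ennreal (exp ((- l *\<^sub>R x) \<bullet> y)))"
    for y
  proof (cases "y \<in> ?H")
    case True
    then have "0 \<le> l * (- (x \<bullet> y) - s)" using \<open>l \<ge> 0\<close> by simp
    then have "1 \<le> exp (- l * s) * exp ((- l *\<^sub>R x) \<bullet> y)"
      by (simp add: mult_exp_exp algebra_simps)
    then show ?thesis
      using True by (simp add: ennreal_mult'[symmetric] flip: ennreal_1)
  qed simp
  have "emeasure lborel ?H = (\<integral>\<^sup>+y. indicator ?H y \<partial>lborel)"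
    by (intro nn_integral_indicator[symmetric]) (simp add: closed_halfspace_le borel_closed)
  also have "\<dots> \<le> (\<integral>\<^sup>+y. ennreal (exp (- l * s))
                 * (indicator centred_unit_box y * ennreal (exp ((- l *\<^sub>R x) \<bullet> y))) \<partial>lborel)"
    by (intro nn_integral_mono markov)
  also have "\<dots> = ennreal (exp (- l * s))
                 * (\<integral>\<^sup>+y. indicator centred_unit_box y * ennreal (exp ((- l *\<^sub>R x) \<bullet> y)) \<partial>lborel)"
    by (rule nn_integral_cmult) measurable
  also have "\<dots> \<le> ennreal (exp (- l * s)) * ennreal (exp ((norm (- l *\<^sub>R x))\<^sup>2 / 8))"
    by (intro mult_left_mono nn_integral_centred_unit_box_exp_inner_le) simp
  also have "\<dots> = ennreal (exp (- l * s + l\<^sup>2 * (norm x)\<^sup>2 / 8))"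
    using \<open>l \<ge> 0\<close> by (simp add: ennreal_mult'[symmetric] mult_exp_exp power_mult_distrib)
  finally show ?thesis .
qed

lemma emeasure_centred_unit_box_halfspace_le:
  fixes x :: "'a::euclidean_space" and s :: real
  assumes "s \<ge> 0"
  shows "emeasure lborel (centred_unit_box \<inter> {y. x \<bullet> y \<le> -s})
           \<le> ennreal (exp (- (2 * s\<^sup>2 / (norm x)\<^sup>2)))"
proof -
  \<comment> \<open>The Chernoff exponent is minimised at \<open>l = 4 s / |x|\<^sup>2\<close>; for \<open>x = 0\<close> this is \<open>l = 0\<close>.\<close>
  have "- (4 * s / (norm x)\<^sup>2) * s + (4 * s / (norm x)\<^sup>2)\<^sup>2 * (norm x)\<^sup>2 / 8 = - (2 * s\<^sup>2 / (norm x)\<^sup>2)"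
    by (cases "x = 0") (simp_all add: field_simps power2_eq_square)
  with emeasure_centred_unit_box_halfspace_le_exp[of "4 * s / (norm x)\<^sup>2" x s] assms show ?thesis
    by simp
qed

lemma inner_le_of_norm_add_le:
  fixes x y :: "'a::real_inner"
  assumes "norm (x + y) \<le> N"
  shows "x \<bullet> y \<le> - ((norm x)\<^sup>2 - N\<^sup>2) / 2"
proof -
  have "(norm (x + y))\<^sup>2 \<le> N\<^sup>2" using assms by (intro power_mono) auto
  moreover have "(norm (x + y))\<^sup>2 = (norm x)\<^sup>2 + 2 * (x \<bullet> y) + (norm y)\<^sup>2"
    by (simp add: power2_norm_eq_inner inner_add_left inner_add_right inner_commute)
  ultimately have "2 * (x \<bullet> y) \<le> N\<^sup>2 - (norm x)\<^sup>2" using zero_le_power2[of "norm y"] by linarith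
  then show ?thesis by simp
qed

lemma norm_le_of_unit_cube_add_mem_cball:
  fixes x y :: "real^'n"
  assumes "y \<in> unit_cube" "x + y \<in> cball 0 N"
  shows "norm x \<le> N + real CARD('n) / 2"
proof -
  have "norm y \<le> (\<Sum>i\<in>UNIV. \<bar>y $ i\<bar>)" by (rule norm_le_l1_cart)
  also have "\<dots> \<le> (\<Sum>i\<in>(UNIV::'n set). 1/2)"
    using assms by (intro sum_mono) (auto simp: unit_cube_def)
  finally have "norm y \<le> real CARD('n) / 2" by simp
  moreover have "norm x \<le> norm (x + y) + norm y" using norm_triangle_ineq4[of "x + y" y] by simp
  ultimately show ?thesis using assms by simp
qed

lemma measure_unit_cube_add_mem_cball_le:
  fixes x :: "real^'n"
  assumes "s \<ge> 0" "N\<^sup>2 + 2 * s \<le> (norm x)\<^sup>2"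
  shows "measure lebesgue {y \<in> unit_cube. x + y \<in> cball 0 N} \<le> exp (- (2 * s\<^sup>2 / (norm x)\<^sup>2))"
proof -
  let ?S = "{y \<in> unit_cube. x + y \<in> cball 0 N}"
  have "?S \<subseteq> centred_unit_box \<inter> {y. x \<bullet> y \<le> -s}"
    using assms by (auto simp: unit_cube_eq_centred_unit_box dest!: inner_le_of_norm_add_le)
  moreover have "?S = centred_unit_box \<inter> cball (- x) N"
    using norm_minus_cancel[of "x + _"] by (auto simp: unit_cube_eq_centred_unit_box dist_norm)
  then have S_sets: "?S \<in> sets lborel"
    by (simp add: sets.Int centred_unit_box_sets borel_closed)
  ultimately have "emeasure lborel ?S \<le> emeasure lborel (centred_unit_box \<inter> {y. x \<bullet> y \<le> -s})"
    by (intro emeasure_mono) (simp_all add: closed_halfspace_le borel_closed)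
  also have "\<dots> \<le> ennreal (exp (- (2 * s\<^sup>2 / (norm x)\<^sup>2)))"
    using assms by (intro emeasure_centred_unit_box_halfspace_le)
  finally show ?thesis
    using S_sets by (simp add: measure_def enn2real_leI)
qed

lemma sq_ge_of_ge_mult_sqrt:
  fixes N t X :: real
  assumes "N > 0" "t \<ge> 0" "X \<ge> N * sqrt (1 + t / N)"
  shows "X\<^sup>2 \<ge> N\<^sup>2 + t * N"
proof -
  have "N\<^sup>2 + t * N = (N * sqrt (1 + t / N))\<^sup>2"
    using assms by (simp add: power_mult_distrib field_simps power2_eq_square)
  also have "\<dots> \<le> X\<^sup>2" using assms by (intro power_mono) auto
  finally show ?thesis .
qed

lemma chernoff_exponent_ge:
  fixes C N X d t :: real
  assumes "C > 0" "N > 0" "N \<ge> C * d" "X > 0" "X \<le> N + d / 2"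
  shows "(7/32) * (C\<^sup>2 / (C + 1)\<^sup>2) * t\<^sup>2 \<le> 2 * (t * N / 2)\<^sup>2 / X\<^sup>2"
proof -
  have "C * X \<le> C * (N + d / 2)" using assms by (intro mult_left_mono) auto
  also have "\<dots> \<le> N * (C + 1)" using assms by (simp add: algebra_simps)
  finally have "(C * X)\<^sup>2 \<le> (N * (C + 1))\<^sup>2" using assms by (intro power_mono) auto
  then have "C\<^sup>2 * X\<^sup>2 \<le> N\<^sup>2 * (C + 1)\<^sup>2" by (simp only: power_mult_distrib)
  then have "C\<^sup>2 / (C + 1)\<^sup>2 \<le> N\<^sup>2 / X\<^sup>2"
    using assms by (simp add: field_simps)
  then have "(7/32) * (C\<^sup>2 / (C + 1)\<^sup>2) * t\<^sup>2 \<le> (1/2) * (N\<^sup>2 / X\<^sup>2) * t\<^sup>2"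
    by (intro mult_right_mono mult_mono) auto
  also have "\<dots> = 2 * (t * N / 2)\<^sup>2 / X\<^sup>2" by (simp add: power_mult_distrib field_simps)
  finally show ?thesis .
qed

theorem lemma5p2:
  fixes x :: "real^'n" and C N t :: real
  assumes "C > 0" and "N \<ge> C * real CARD('n)" and "t > 0"
    and "norm x \<ge> N * sqrt (1 + t / N)"
  shows "measure lebesgue {y \<in> unit_cube. x + y \<in> cball 0 N}
           \<le> 2 * exp (- ((7/32) * (C^2 / (C + 1)^2)) * t^2)"
proof (cases "{y \<in> unit_cube. x + y \<in> cball 0 N} = {}")
  case False
  then obtain y0 where "y0 \<in> unit_cube" "x + y0 \<in> cball 0 N" by auto
  then have norm_x_le: "norm x \<le> N + real CARD('n) / 2"
    by (rule norm_le_of_unit_cube_add_mem_cball)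
  have "C * 1 \<le> C * real CARD('n)" using \<open>C > 0\<close> by (intro mult_left_mono) (auto simp: Suc_le_eq)
  then have "N > 0" using assms(1,2) by linarith
  then have norm_x_sq: "(norm x)\<^sup>2 \<ge> N\<^sup>2 + t * N"
    using assms by (intro sq_ge_of_ge_mult_sqrt) auto
  have "0 < N\<^sup>2 + t * N" using \<open>N > 0\<close> \<open>t > 0\<close> by (intro add_pos_pos mult_pos_pos) simp_all
  then have "norm x > 0" using norm_x_sq by (auto intro: ccontr)
  have "measure lebesgue {y \<in> unit_cube. x + y \<in> cball 0 N} \<le> exp (- (2 * (t * N / 2)\<^sup>2 / (norm x)\<^sup>2))"
    using \<open>N > 0\<close> \<open>t > 0\<close> norm_x_sq by (intro measure_unit_cube_add_mem_cball_le) auto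
  also have "\<dots> \<le> exp (- ((7/32) * (C\<^sup>2 / (C + 1)\<^sup>2)) * t\<^sup>2)"
    using chernoff_exponent_ge[OF \<open>C > 0\<close> \<open>N > 0\<close> assms(2) \<open>norm x > 0\<close> norm_x_le] by simp
  also have "\<dots> \<le> 2 * exp (- ((7/32) * (C\<^sup>2 / (C + 1)\<^sup>2)) * t\<^sup>2)" by simp
  finally show ?thesis .
next
  case True
  then show ?thesis by (simp only: measure_empty) simp
qed

end
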